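(* Let $\{\mathcal G,(\Gamma_0,\Gamma_1),(\widetilde\Gamma_0,\widetilde\Gamma_1)\}$ be a triple for the adjoint pair $\{S,\widetilde S\}$ satisfying (G), (D), (M), and assume $\rho(A_0)\neq\emptyset$ (equivalently $\rho(\widetilde A_0)\neq\emptyset$). Let $\gamma,\widetilde\gamma$ be the $\gamma$-fields and $M,\widetilde M$ the Weyl functions. Then for all $\lambda\in\rho(A_0)$ and $\mu\in\rho(\widetilde A_0)$: (i) $M(\lambda)$ and $\widetilde M(\mu)$ are operators in $\mathcal G$ with dense domains $\operatorname{dom}M(\lambda)=\operatorname{ran}\Gamma_0$, $\operatorname{dom}\widetilde M(\mu)=\operatorname{ran}\widetilde\Gamma_0$, and $\operatorname{ran}M(\lambda)\subset\operatorname{ran}\Gamma_1$, $\operatorname{ran}\widetilde M(\mu)\subset\operatorname{ran}\widetilde\Gamma_1$; (ii) $M(\lambda)\subset\widetilde M(\overline\lambda)^*$ and $\widetilde M(\overline\lambda)\subset M(\lambda)^*$, and $M(\lambda)-\widetilde M(\mu)^*=(\lambda-\overline\mu)\widetilde\gamma(\mu)^*\gamma(\lambda)$, $M(\lambda)^*-\widetilde M(\mu)=(\overline\lambda-\mu)\gamma(\lambda)^*\widetilde\gamma(\mu)$; (iii) for fixed $\lambda_0,\mu_0\in\rho(A_0)\cap\rho(\widetilde A_0)$, $M(\lambda)=\widetilde M(\lambda_0)^*+\widetilde\gamma(\lambda_0)^*(\lambda-\overline{\lambda_0})(I+(\lambda-\lambda_0)(A_0-\lambda)^{-1})\gamma(\lambda_0)$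 and $\widetilde M(\mu)=M(\mu_0)^*+\gamma(\mu_0)^*(\mu-\overline{\mu_0})(I+(\mu-\mu_0)(\widetilde A_0-\mu)^{-1})\widetilde\gamma(\mu_0)$, i.e. $M$ and $\widetilde M$ are the sum of a fixed closed (possibly unbounded) operator and a bounded holomorphic operator function.
   Context: Let $\mathfrak H$ be a separable Hilbert space. An adjoint pair $\{S,\widetilde S\}$ consists of densely defined closed operators $S,\widetilde S$ in $\mathfrak H$ with $(Sf,g)=(f,\widetilde Sg)$ for all $f\in\operatorname{dom}S$, $g\in\operatorname{dom}\widetilde S$. Fix operators $T\subset S^*$ and $\widetilde T\subset\widetilde S^*$ which are cores, i.e. $\overline T=S^*$ and $\overline{\widetilde T}=\widetilde S^*$. A triple $\{\mathcal G,(\Gamma_0,\Gamma_1),(\widetilde\Gamma_0,\widetilde\Gamma_1)\}$ for $\{S,\widetilde S\}$ consists of a Hilbert space $\mathcal G$ and linear maps $\Gamma_0,\Gamma_1:\operatorname{dom}T\to\mathcal G$, $\widetilde\Gamma_0,\widetilde\Gamma_1:\operatorname{dom}\widetilde T\to\mathcal G$. Put $A_0:=T\upharpoonright\ker\Gamma_0$ and $\widetilde A_0:=\widetilde T\upharpoonright\ker\widetilde\Gamma_0$. Conditions: (G) $(Tf,g)_{\mathfrak H}-(f,\widetilde Tg)_{\mathfrak H}=(\Gamma_1f,\widetilde\Gamma_0g)_{\mathcal G}-(\Gamma_0f,\widetilde\Gamma_1g)_{\mathcal G}$ for all $f\in\operatorname{dom}T$, $g\in\operatorname{dom}\widetilde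 T$; (D) $\operatorname{ran}\Gamma_0$ and $\operatorname{ran}\widetilde\Gamma_0$ are dense in $\mathcal G$; (M) $A_0^*=\widetilde A_0$ and $\widetilde A_0^*=A_0$. For $\lambda\in\rho(A_0)$ one has $\operatorname{dom}T=\ker\Gamma_0\dotplus\ker(T-\lambda)$, so $\Gamma_0\upharpoonright\ker(T-\lambda)$ is injective; similarly for $\widetilde T$. The $\gamma$-fields are $\gamma(\lambda):=(\Gamma_0\upharpoonright\ker(T-\lambda))^{-1}$, $\lambda\in\rho(A_0)$, and $\widetilde\gamma(\mu):=(\widetilde\Gamma_0\upharpoonright\ker(\widetilde T-\mu))^{-1}$, $\mu\in\rho(\widetilde A_0)$; the Weyl functions are $M(\lambda):=\Gamma_1\gamma(\lambda)$ and $\widetilde M(\mu):=\widetilde\Gamma_1\widetilde\gamma(\mu)$. *)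

theory Defs
  imports "HOL-Analysis.Analysis"
begin

text \<open>Complex Hilbert spaces: a complete complex normed space whose norm comes from
  a complex inner product ip (linear in the first, conjugate linear in the second argument).
  (Possibly unbounded) operators and linear relations are represented by their graphs.\<close>

class complex_vector = real_vector +
  fixes scaleC :: "complex \<Rightarrow> 'a \<Rightarrow> 'a" (infixr \<open>*\<^sub>C\<close> 75)
  assumes scaleC_add_right: "c *\<^sub>C (x + y) = c *\<^sub>C x + c *\<^sub>C y"
    and scaleC_add_left: "(b + c) *\<^sub>C x = b *\<^sub>C x + c *\<^sub>C x"
    and scaleC_scaleC: "b *\<^sub>C (c *\<^sub>C x) = (b * c) *\<^sub>C x"
    and scaleC_one: "1 *\<^sub>C x = x"
    and scaleR_scaleC: "scaleR r x = complex_of_real r *\<^sub>C x"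

class complex_normed_vector = complex_vector + real_normed_vector +
  assumes norm_scaleC: "norm (c *\<^sub>C x) = cmod c * norm x"

definition is_cinner :: "('a::complex_normed_vector \<Rightarrow> 'a \<Rightarrow> complex) \<Rightarrow> bool" where
  "is_cinner ip \<longleftrightarrow>
     (\<forall>x y z. ip (x + y) z = ip x z + ip y z) \<and>
     (\<forall>c x y. ip (c *\<^sub>C x) y = c * ip x y) \<and>
     (\<forall>x y. ip y x = cnj (ip x y)) \<and>
     (\<forall>x. ip x x = complex_of_real ((norm x)\<^sup>2))"

definition separable_type :: "'a::topological_space itself \<Rightarrow> bool" where
  "separable_type _ \<longleftrightarrow> (\<exists>D::'a set. countable D \<and> closure D = UNIV)"

definition csubspace :: "'a::complex_vector set \<Rightarrow> bool" where
  "csubspace V \<longleftrightarrow> 0 \<in> V \<and> (\<forall>x\<in>V. \<forall>y\<in>V. x + y \<in> V) \<and> (\<forall>c. \<forall>x\<in>V. c *\<^sub>C x \<in> V)"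

definition is_op :: "('a::complex_vector \<times> 'b::complex_vector) set \<Rightarrow> bool" where
  "is_op A \<longleftrightarrow> (0, 0) \<in> A \<and>
     (\<forall>x y u v. (x, y) \<in> A \<longrightarrow> (u, v) \<in> A \<longrightarrow> (x + u, y + v) \<in> A) \<and>
     (\<forall>c x y. (x, y) \<in> A \<longrightarrow> (c *\<^sub>C x, c *\<^sub>C y) \<in> A) \<and>
     single_valued A"

definition densely_defined :: "('a::topological_space \<times> 'b) set \<Rightarrow> bool" where
  "densely_defined A \<longleftrightarrow> closure (Domain A) = UNIV"

definition closed_op :: "('a::complex_normed_vector \<times> 'b::complex_normed_vector) set \<Rightarrow> bool" where
  "closed_op A \<longleftrightarrow> is_op A \<and> closed A"

definition adj :: "('a \<Rightarrow> 'a \<Rightarrow> complex) \<Rightarrow> ('b \<Rightarrow> 'b \<Rightarrow> complex) \<Rightarrow> ('a \<times> 'b) set \<Rightarrow> ('b \<times> 'a) set" where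
  "adj ipX ipY A = {(y, x). \<forall>(u, v)\<in>A. ipY v y = ipX u x}"

definition op_plus :: "('a \<times> 'b::complex_vector) set \<Rightarrow> ('a \<times> 'b) set \<Rightarrow> ('a \<times> 'b) set" where
  "op_plus A B = {(x, y + z) | x y z. (x, y) \<in> A \<and> (x, z) \<in> B}"

definition op_minus :: "('a \<times> 'b::complex_vector) set \<Rightarrow> ('a \<times> 'b) set \<Rightarrow> ('a \<times> 'b) set" where
  "op_minus A B = {(x, y - z) | x y z. (x, y) \<in> A \<and> (x, z) \<in> B}"

definition op_scale :: "complex \<Rightarrow> ('a \<times> 'b::complex_vector) set \<Rightarrow> ('a \<times> 'b) set" where
  "op_scale c A = {(x, c *\<^sub>C y) | x y. (x, y) \<in> A}"

definition op_comp :: "('b \<times> 'c) set \<Rightarrow> ('a \<times> 'b) set \<Rightarrow> ('a \<times> 'c) set" where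
  "op_comp B A = A O B"

definition op_id :: "('a \<times> 'a) set" where
  "op_id = {(x, x) | x. True}"

definition resolvent_op :: "('a::complex_vector \<times> 'a) set \<Rightarrow> complex \<Rightarrow> ('a \<times> 'a) set" where
  "resolvent_op A l = {(g - l *\<^sub>C f, f) | f g. (f, g) \<in> A}"

definition resolvent_set :: "('a::complex_normed_vector \<times> 'a) set \<Rightarrow> complex set" where
  "resolvent_set A = {l. single_valued (resolvent_op A l) \<and> Domain (resolvent_op A l) = UNIV \<and>
       (\<exists>C. \<forall>(x, y)\<in>resolvent_op A l. norm y \<le> C * norm x)}"

definition graph_on :: "'a set \<Rightarrow> ('a \<Rightarrow> 'b) \<Rightarrow> ('a \<times> 'b) set" where
  "graph_on D f = {(x, f x) | x. x \<in> D}"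

definition clinear_on :: "'a::complex_vector set \<Rightarrow> ('a \<Rightarrow> 'b::complex_vector) \<Rightarrow> bool" where
  "clinear_on D f \<longleftrightarrow> (\<forall>x\<in>D. \<forall>y\<in>D. f (x + y) = f x + f y) \<and> (\<forall>c. \<forall>x\<in>D. f (c *\<^sub>C x) = c *\<^sub>C f x)"

definition A0_of :: "('a \<times> 'a) set \<Rightarrow> ('a \<Rightarrow> 'g::zero) \<Rightarrow> ('a \<times> 'a) set" where
  "A0_of T \<Gamma>0 = {(f, g). (f, g) \<in> T \<and> \<Gamma>0 f = 0}"

definition gamma_field :: "('a::complex_vector \<times> 'a) set \<Rightarrow> ('a \<Rightarrow> 'g) \<Rightarrow> complex \<Rightarrow> ('g \<times> 'a) set" where
  "gamma_field T \<Gamma>0 l = converse (graph_on {f. (f, l *\<^sub>C f) \<in> T} \<Gamma>0)"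

definition weyl_function :: "('a::complex_vector \<times> 'a) set \<Rightarrow> ('a \<Rightarrow> 'g) \<Rightarrow> ('a \<Rightarrow> 'g) \<Rightarrow> complex \<Rightarrow> ('g \<times> 'g) set" where
  "weyl_function T \<Gamma>0 \<Gamma>1 l = op_comp (graph_on (Domain T) \<Gamma>1) (gamma_field T \<Gamma>0 l)"

end

theory Submission
  imports Defs
begin

text \<open>
  Everything rests on Green's identity (G) evaluated on eigenvectors: for
  \<open>f \<in> ker (T - \<lambda>)\<close> and \<open>g \<in> ker (T~ - \<mu>)\<close> it reads
  \<open>(\<lambda> - cnj \<mu>) (f, g) = (\<Gamma>\<^sub>1 f, \<Gamma>~\<^sub>0 g) - (\<Gamma>\<^sub>0 f, \<Gamma>~\<^sub>1 g)\<close>.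
  Since \<open>\<lambda> \<in> \<rho>(A\<^sub>0)\<close>, every boundary value \<open>\<Gamma>\<^sub>0 h\<close> is attained by exactly one
  eigenvector in \<open>ker (T - \<lambda>)\<close>, so \<open>\<gamma>(\<lambda>)\<close> and \<open>M(\<lambda>)\<close> are operators defined on \<open>ran \<Gamma>\<^sub>0\<close>.
  By (M), \<open>A\<^sub>0 = A~\<^sub>0\<^sup>*\<close>, and the Riesz representation theorem turns \<open>\<mu> \<in> \<rho>(A~\<^sub>0)\<close> into
  surjectivity of \<open>A\<^sub>0 - cnj \<mu>\<close>; Green's identity applied to preimages then shows that
  \<open>\<gamma>~(\<mu>)\<^sup>*\<close> is everywhere defined. With this, (ii) follows from Green's identity and
  the single-valuedness of \<open>M~(\<mu>)\<^sup>*\<close>, which holds because \<open>dom M~(\<mu>) = ran \<Gamma>~\<^sub>0\<close> is dense.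
  For (iii), \<open>f\<^sub>0 + (\<lambda> - \<lambda>\<^sub>0)(A\<^sub>0 - \<lambda>)\<^sup>-\<^sup>1 f\<^sub>0\<close> is the eigenvector for \<open>\<lambda>\<close> with the same
  boundary value \<open>\<Gamma>\<^sub>0\<close> as the eigenvector \<open>f\<^sub>0\<close> for \<open>\<lambda>\<^sub>0\<close>; hence
  \<open>\<gamma>(\<lambda>) = (I + (\<lambda> - \<lambda>\<^sub>0)(A\<^sub>0 - \<lambda>)\<^sup>-\<^sup>1) \<gamma>(\<lambda>\<^sub>0)\<close>, and (iii) is (ii) at \<open>\<mu> = \<lambda>\<^sub>0\<close>.
\<close>

lemma scaleC_zero_left [simp]: "(0::complex) *\<^sub>C (x::'a::complex_vector) = 0"
  using scaleR_scaleC[of 0 x] by simp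

lemma scaleC_zero_right [simp]: "c *\<^sub>C (0::'a::complex_vector) = 0"
proof -
  have "c *\<^sub>C (0::'a) = c *\<^sub>C 0 + c *\<^sub>C 0" using scaleC_add_right[of c 0 0] by simp
  then show ?thesis by simp
qed

declare scaleC_one [simp]

lemma scaleC_minus_one: "(-1) *\<^sub>C (x::'a::complex_vector) = - x"
  using scaleR_scaleC[of "-1" x] by simp

lemma scaleC_minus_right: "c *\<^sub>C (- x::'a::complex_vector) = - (c *\<^sub>C x)"
proof -
  have "c *\<^sub>C (- x) = c *\<^sub>C ((-1) *\<^sub>C x)" by (simp add: scaleC_minus_one)
  also have "\<dots> = (-1) *\<^sub>C (c *\<^sub>C x)" by (simp add: scaleC_scaleC mult.commute)
  finally show ?thesis by (simp add: scaleC_minus_one)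
qed

lemma scaleC_diff_right: "c *\<^sub>C (x - y::'a::complex_vector) = c *\<^sub>C x - c *\<^sub>C y"
  using scaleC_add_right[of c x "-y"] by (simp add: scaleC_minus_right)

lemma scaleC_left_commute: "a *\<^sub>C (b *\<^sub>C x) = b *\<^sub>C (a *\<^sub>C (x::'a::complex_vector))"
  by (simp add: scaleC_scaleC mult.commute)

section \<open>Complex inner products\<close>

locale complex_inner =
  fixes ip :: "'a::complex_normed_vector \<Rightarrow> 'a \<Rightarrow> complex"
  assumes is_cinner: "is_cinner ip"
begin

lemma add_left: "ip (x + y) z = ip x z + ip y z"
  using is_cinner unfolding is_cinner_def by blast

lemma scale_left: "ip (c *\<^sub>C x) y = c * ip x y"
  using is_cinner unfolding is_cinner_def by blast

lemma conj_sym: "ip y x = cnj (ip x y)"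
  using is_cinner unfolding is_cinner_def by blast

lemma self_eq_norm_sq: "ip x x = complex_of_real ((norm x)\<^sup>2)"
  using is_cinner unfolding is_cinner_def by blast

lemma add_right: "ip x (y + z) = ip x y + ip x z"
  by (metis add_left conj_sym complex_cnj_add)

lemma scale_right: "ip x (c *\<^sub>C y) = cnj c * ip x y"
  by (metis scale_left conj_sym complex_cnj_mult complex_cnj_cnj)

lemma zero_left [simp]: "ip 0 y = 0"
  using scale_left[of 0 0 y] by simp

lemma zero_right [simp]: "ip x 0 = 0"
  using scale_right[of x 0 0] by simp

lemma minus_left: "ip (- x) y = - ip x y"
  using scale_left[of "-1" x y] by (simp add: scaleC_minus_one)

lemma minus_right: "ip x (- y) = - ip x y"
  using scale_right[of x "-1" y] by (simp add: scaleC_minus_one)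

lemma diff_left: "ip (x - y) z = ip x z - ip y z"
  using add_left[of x "-y" z] by (simp add: minus_left)

lemma diff_right: "ip x (y - z) = ip x y - ip x z"
  using add_right[of x y "-z"] by (simp add: minus_right)

lemma self_eq_0_iff: "ip x x = 0 \<longleftrightarrow> x = 0"
  by (simp add: self_eq_norm_sq)

lemma norm_sq_minus_projection:
  assumes "y \<noteq> 0"
  shows "(norm (x + (- ip x y / ip y y) *\<^sub>C y))\<^sup>2 = (norm x)\<^sup>2 - (cmod (ip x y))\<^sup>2 / (norm y)\<^sup>2"
proof -
  define a where "a = ip x y"
  define n where "n = (norm y)\<^sup>2"
  define t where "t = - a / complex_of_real n"
  have n: "n > 0" using assms by (simp add: n_def)
  have yy: "ip y y = complex_of_real n" by (simp add: self_eq_norm_sq n_def)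
  have yx: "ip y x = cnj a" by (simp add: a_def conj_sym[of x y])
  have "ip (x + t *\<^sub>C y) (x + t *\<^sub>C y) = ip x x + cnj t * a + t * cnj a + t * cnj t * complex_of_real n"
    by (simp add: add_left add_right scale_left scale_right algebra_simps a_def yy yx[unfolded a_def])
  also have "\<dots> = ip x x - a * cnj a / complex_of_real n"
    using n unfolding t_def by (simp add: field_simps)
  also have "\<dots> = complex_of_real ((norm x)\<^sup>2 - (cmod a)\<^sup>2 / n)"
    by (simp add: self_eq_norm_sq complex_norm_square[symmetric])
  finally have "(norm (x + t *\<^sub>C y))\<^sup>2 = (norm x)\<^sup>2 - (cmod a)\<^sup>2 / n"
    unfolding self_eq_norm_sq using of_real_eq_iff by blast
  then show ?thesis unfolding t_def a_def n_def by (simp add: self_eq_norm_sq)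
qed

lemma cauchy_schwarz: "cmod (ip x y) \<le> norm x * norm y"
proof (cases "y = 0")
  case False
  have "0 \<le> (norm x)\<^sup>2 - (cmod (ip x y))\<^sup>2 / (norm y)\<^sup>2"
    using norm_sq_minus_projection[OF False, of x] by (metis zero_le_power2)
  then have "(cmod (ip x y))\<^sup>2 \<le> (norm x * norm y)\<^sup>2"
    using False by (simp add: field_simps power_mult_distrib)
  then show ?thesis by (simp add: power_mono_iff abs_le_square_iff)
qed simp

lemma bounded_linear_left: "bounded_linear (\<lambda>x. ip x z)"
proof
  show "ip (x + y) z = ip x z + ip y z" for x y by (rule add_left)
  show "ip (r *\<^sub>R x) z = r *\<^sub>R ip x z" for r x
    by (simp add: scaleR_scaleC scale_left scaleR_conv_of_real)
  show "\<exists>K. \<forall>x. norm (ip x z) \<le> norm x * K"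
    using cauchy_schwarz by blast
qed

lemma eq_0_if_orthogonal_dense:
  assumes "closure D = UNIV" "\<forall>d\<in>D. ip d z = 0"
  shows "z = 0"
proof -
  have "closed {d. ip d z = 0}"
    by (intro closed_Collect_eq continuous_on_const linear_continuous_on bounded_linear_left)
  moreover have "D \<subseteq> {d. ip d z = 0}" using assms(2) by auto
  ultimately have "closure D \<subseteq> {d. ip d z = 0}" by (rule closure_minimal[rotated])
  then have "ip z z = 0" using assms(1) by auto
  then show ?thesis by (simp add: self_eq_0_iff)
qed

lemma parallelogram: "(norm (x + y :: 'a))\<^sup>2 + (norm (x - y))\<^sup>2 = 2 * (norm x)\<^sup>2 + 2 * (norm y)\<^sup>2"
proof -
  have "ip (x + y) (x + y) + ip (x - y) (x - y) = 2 * ip x x + 2 * ip y y"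
    by (simp add: add_left add_right diff_left diff_right)
  then have "complex_of_real ((norm (x + y))\<^sup>2 + (norm (x - y))\<^sup>2)
      = complex_of_real (2 * (norm x)\<^sup>2 + 2 * (norm y)\<^sup>2)"
    by (simp add: self_eq_norm_sq)
  then show ?thesis using of_real_eq_iff by blast
qed

lemma minimizing_sequence_Cauchy:
  fixes xs :: "nat \<Rightarrow> 'a"
  assumes midpoint: "\<And>x y. x \<in> K \<Longrightarrow> y \<in> K \<Longrightarrow> (1/2::real) *\<^sub>R (x + y) \<in> K"
    and lower: "\<And>x. x \<in> K \<Longrightarrow> d \<le> (norm x)\<^sup>2"
    and xsK: "\<And>n. xs n \<in> K"
    and xs_norm: "\<And>n. (norm (xs n))\<^sup>2 < d + inverse (real (Suc n))"
  shows "Cauchy xs"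
  unfolding Cauchy_def
proof (intro allI impI)
  have dist_sq: "(norm (xs n - xs m))\<^sup>2 \<le> 2 * inverse (real (Suc n)) + 2 * inverse (real (Suc m))"
    for n m
  proof -
    have "d \<le> (norm ((1/2::real) *\<^sub>R (xs n + xs m)))\<^sup>2" by (intro lower midpoint xsK)
    also have "\<dots> = (norm (xs n + xs m))\<^sup>2 / 4" by (simp add: power2_eq_square)
    finally have "4 * d \<le> (norm (xs n + xs m))\<^sup>2" by simp
    with parallelogram[of "xs n" "xs m"] xs_norm[of n] xs_norm[of m] show ?thesis by linarith
  qed
  fix e :: real assume e: "e > 0"
  obtain N where N: "4 / e\<^sup>2 < real N" using reals_Archimedean2 by blast
  have "4 / real (Suc N) < e\<^sup>2"
  proof -
    have "4 < real N * e\<^sup>2" using N e by (simp add: field_simps)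
    then have "4 < real (Suc N) * e\<^sup>2" using e
      by (smt (verit) of_nat_Suc mult_right_mono zero_le_power2 distrib_right)
    then show ?thesis by (simp add: field_simps)
  qed
  show "\<exists>N. \<forall>m\<ge>N. \<forall>n\<ge>N. dist (xs m) (xs n) < e"
  proof (intro exI[of _ N] allI impI)
    fix m n assume "N \<le> m" "N \<le> n"
    then have "inverse (real (Suc m)) \<le> inverse (real (Suc N))"
      "inverse (real (Suc n)) \<le> inverse (real (Suc N))"
      by (simp_all add: le_imp_inverse_le)
    then have "(norm (xs m - xs n))\<^sup>2 < e\<^sup>2"
      using dist_sq[of m n] \<open>4 / real (Suc N) < e\<^sup>2\<close> unfolding divide_inverse by linarith
    then show "dist (xs m) (xs n) < e" using e by (simp add: power_less_imp_less_base dist_norm)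
  qed
qed

end

locale complex_hilbert = complex_inner ip
  for ip :: "'a::{complex_normed_vector,complete_space} \<Rightarrow> 'a \<Rightarrow> complex"
begin

lemma exists_min_norm:
  fixes K :: "'a set"
  assumes "closed K" "K \<noteq> {}"
    and midpoint: "\<And>x y. x \<in> K \<Longrightarrow> y \<in> K \<Longrightarrow> (1/2::real) *\<^sub>R (x + y) \<in> K"
  shows "\<exists>z\<in>K. \<forall>x\<in>K. norm z \<le> norm x"
proof -
  define d where "d = Inf ((\<lambda>x. (norm x)\<^sup>2) ` K)"
  have bdd: "bdd_below ((\<lambda>x. (norm x)\<^sup>2) ` K)"
    by (rule bdd_belowI[of _ 0]) auto
  have lower: "x \<in> K \<Longrightarrow> d \<le> (norm x)\<^sup>2" for x
    unfolding d_def by (rule cInf_lower[OF _ bdd]) auto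
  have "\<forall>n. \<exists>x\<in>K. (norm x)\<^sup>2 < d + inverse (real (Suc n))"
  proof
    fix n
    have "(\<lambda>x. (norm x)\<^sup>2) ` K \<noteq> {}" using \<open>K \<noteq> {}\<close> by blast
    moreover have "Inf ((\<lambda>x. (norm x)\<^sup>2) ` K) < d + inverse (real (Suc n))"
      unfolding d_def[symmetric] by simp
    ultimately have "\<exists>v\<in>(\<lambda>x. (norm x)\<^sup>2) ` K. v < d + inverse (real (Suc n))"
      by (rule cInf_lessD)
    then show "\<exists>x\<in>K. (norm x)\<^sup>2 < d + inverse (real (Suc n))" by blast
  qed
  then obtain xs where xsK: "\<And>n. xs n \<in> K"
    and xs_norm: "\<And>n. (norm (xs n))\<^sup>2 < d + inverse (real (Suc n))"
    by metis
  have "Cauchy xs" by (rule minimizing_sequence_Cauchy[OF midpoint lower xsK xs_norm])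
  then obtain z where lim: "xs \<longlonglongrightarrow> z" using Cauchy_convergent_iff convergent_def by blast
  have "z \<in> K" using closed_sequentially \<open>closed K\<close> xsK lim by blast
  have "(\<lambda>n. (norm (xs n))\<^sup>2) \<longlonglongrightarrow> (norm z)\<^sup>2" by (intro tendsto_intros lim)
  moreover have "(\<lambda>n. d + inverse (real (Suc n))) \<longlonglongrightarrow> d + 0"
    by (intro tendsto_intros LIMSEQ_inverse_real_of_nat)
  ultimately have "(norm z)\<^sup>2 \<le> d + 0"
    by (rule LIMSEQ_le) (use xs_norm less_imp_le in blast)
  have "norm z \<le> norm x" if "x \<in> K" for x
  proof (rule power2_le_imp_le)
    show "(norm z)\<^sup>2 \<le> (norm x)\<^sup>2" using \<open>(norm z)\<^sup>2 \<le> d + 0\<close> lower[OF that] by linarith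
  qed simp
  with \<open>z \<in> K\<close> show ?thesis by blast
qed

lemma riesz_representation:
  assumes F_add: "\<And>x y. F (x + y) = F x + F y" and F_scale: "\<And>c x. F (c *\<^sub>C x) = c * F x"
    and F_bound: "\<And>x. cmod (F x) \<le> C * norm x"
  shows "\<exists>k. \<forall>x. F x = ip x k"
proof (cases "\<forall>x. F x = 0")
  case True
  then show ?thesis by (intro exI[of _ 0]) simp
next
  case False
  then obtain x0 where x0: "F x0 \<noteq> 0" by blast
  have blF: "bounded_linear F"
  proof
    show "F (x + y) = F x + F y" for x y by (rule F_add)
    show "F (r *\<^sub>R x) = r *\<^sub>R F x" for r x
      by (simp add: scaleR_scaleC F_scale scaleR_conv_of_real)
    show "\<exists>K. \<forall>x. norm (F x) \<le> norm x * K"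
      using F_bound by (metis mult.commute norm_complex_def)
  qed
  have F_diff: "F (x - y) = F x - F y" for x y
    using linear_diff[OF bounded_linear.linear[OF blF]] by blast
  define K where "K = {x. F x = 1}"
  have "closed K" unfolding K_def
    by (intro closed_Collect_eq continuous_on_const linear_continuous_on blF)
  moreover have "K \<noteq> {}" using x0 by (auto simp: K_def F_scale intro!: exI[of _ "(1 / F x0) *\<^sub>C x0"])
  moreover have "(1/2::real) *\<^sub>R (x + y) \<in> K" if "x \<in> K" "y \<in> K" for x y
    using that unfolding K_def
    by (simp add: linear_scale[OF bounded_linear.linear[OF blF]] F_add scaleR_conv_of_real)
  ultimately obtain z where "z \<in> K" and minimal: "\<And>x. x \<in> K \<Longrightarrow> norm z \<le> norm x"
    using exists_min_norm[of K] by blast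
  then have Fz: "F z = 1" by (simp add: K_def)
  have orth: "ip w z = 0" if Fw: "F w = 0" for w
  proof (cases "w = 0")
    case False
    have "z + (- ip z w / ip w w) *\<^sub>C w \<in> K" using Fz Fw by (simp add: K_def F_add F_scale)
    then have "(norm z)\<^sup>2 \<le> (norm (z + (- ip z w / ip w w) *\<^sub>C w))\<^sup>2"
      by (intro power_mono minimal) simp_all
    then have "(norm z)\<^sup>2 \<le> (norm z)\<^sup>2 - (cmod (ip z w))\<^sup>2 / (norm w)\<^sup>2"
      by (simp only: norm_sq_minus_projection[OF False])
    then have "(cmod (ip z w))\<^sup>2 \<le> 0" using False by (simp add: divide_le_0_iff)
    then show ?thesis by (simp add: conj_sym[of z w])
  qed simp
  have "z \<noteq> 0" using Fz F_scale[of 0 0] by auto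
  show ?thesis
  proof (intro exI[of _ "complex_of_real (1 / (norm z)\<^sup>2) *\<^sub>C z"] allI)
    fix w
    have "F (w - F w *\<^sub>C z) = 0" by (simp add: F_diff F_scale Fz)
    then have "ip (w - F w *\<^sub>C z) z = 0" by (rule orth)
    then have "ip w z = F w * complex_of_real ((norm z)\<^sup>2)"
      by (simp add: diff_left scale_left self_eq_norm_sq)
    then show "F w = ip w (complex_of_real (1 / (norm z)\<^sup>2) *\<^sub>C z)"
      unfolding scale_right using \<open>z \<noteq> 0\<close> by simp
  qed
qed

end

lemma gamma_field_iff: "(p, f) \<in> gamma_field T G0 l \<longleftrightarrow> (f, l *\<^sub>C f) \<in> T \<and> p = G0 f"
  unfolding gamma_field_def graph_on_def by auto

lemma weyl_function_iff:
  "(p, x) \<in> weyl_function T G0 G1 l \<longleftrightarrow> (\<exists>f. (f, l *\<^sub>C f) \<in> T \<and> p = G0 f \<and> x = G1 f)"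
  unfolding weyl_function_def op_comp_def gamma_field_def graph_on_def by auto

lemma adj_iff: "(y, x) \<in> adj ipX ipY A \<longleftrightarrow> (\<forall>u v. (u, v) \<in> A \<longrightarrow> ipY v y = ipX u x)"
  unfolding adj_def by auto

lemma A0_of_iff: "(f, g) \<in> A0_of T G0 \<longleftrightarrow> (f, g) \<in> T \<and> G0 f = 0"
  unfolding A0_of_def by auto

lemma resolvent_op_iff: "(w, h) \<in> resolvent_op A l \<longleftrightarrow> (h, w + l *\<^sub>C h) \<in> A"
  unfolding resolvent_op_def by force

lemma op_minus_iff: "(p, q) \<in> op_minus A B \<longleftrightarrow> (\<exists>y z. (p, y) \<in> A \<and> (p, z) \<in> B \<and> q = y - z)"
  unfolding op_minus_def by auto

lemma op_plus_iff: "(p, q) \<in> op_plus A B \<longleftrightarrow> (\<exists>y z. (p, y) \<in> A \<and> (p, z) \<in> B \<and> q = y + z)"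
  unfolding op_plus_def by auto

lemma op_scale_iff: "(p, q) \<in> op_scale c A \<longleftrightarrow> (\<exists>y. (p, y) \<in> A \<and> q = c *\<^sub>C y)"
  unfolding op_scale_def by auto

lemma op_comp_iff: "(p, q) \<in> op_comp B A \<longleftrightarrow> (\<exists>y. (p, y) \<in> A \<and> (y, q) \<in> B)"
  unfolding op_comp_def by auto

lemma op_comp_id_plus_iff:
  "(p, w) \<in> op_comp (op_plus op_id (op_scale c R)) A \<longleftrightarrow>
     (\<exists>f0 k. (p, f0) \<in> A \<and> (f0, k) \<in> R \<and> w = f0 + c *\<^sub>C k)"
  unfolding op_comp_def op_plus_def op_id_def op_scale_def by auto

lemma op_minus_commute: "op_minus A B = op_scale (-1) (op_minus B A)"
  by (force simp: op_minus_def op_scale_def scaleC_minus_one)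

lemma op_scale_op_scale: "op_scale a (op_scale b A) = op_scale (a * b) A"
  by (force simp: op_scale_def scaleC_scaleC)

section \<open>Linear operators and boundary maps\<close>

locale lin_op =
  fixes T :: "('a::complex_vector \<times> 'a) set"
  assumes is_op: "is_op T"
begin

lemma zero: "(0, 0) \<in> T"
  using is_op unfolding is_op_def by blast

lemma add: "(x, y) \<in> T \<Longrightarrow> (u, v) \<in> T \<Longrightarrow> (x + u, y + v) \<in> T"
  using is_op unfolding is_op_def by blast

lemma scale: "(x, y) \<in> T \<Longrightarrow> (c *\<^sub>C x, c *\<^sub>C y) \<in> T"
  using is_op unfolding is_op_def by blast

lemma diff: "(x, y) \<in> T \<Longrightarrow> (u, v) \<in> T \<Longrightarrow> (x - u, y - v) \<in> T"
  using add[of x y "-u" "-v"] scale[of u v "-1"] by (simp add: scaleC_minus_one)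

lemma eigen_add: "(f, l *\<^sub>C f) \<in> T \<Longrightarrow> (g, l *\<^sub>C g) \<in> T \<Longrightarrow> (f + g, l *\<^sub>C (f + g)) \<in> T"
  using add by (simp add: scaleC_add_right)

lemma eigen_diff: "(f, l *\<^sub>C f) \<in> T \<Longrightarrow> (g, l *\<^sub>C g) \<in> T \<Longrightarrow> (f - g, l *\<^sub>C (f - g)) \<in> T"
  using diff by (simp add: scaleC_diff_right)

lemma eigen_scale: "(f, l *\<^sub>C f) \<in> T \<Longrightarrow> (c *\<^sub>C f, l *\<^sub>C (c *\<^sub>C f)) \<in> T"
  using scale[of f "l *\<^sub>C f" c] by (simp add: scaleC_left_commute)

lemma clinear_on_add:
  "clinear_on (Domain T) G \<Longrightarrow> x \<in> Domain T \<Longrightarrow> y \<in> Domain T \<Longrightarrow> G (x + y) = G x + G y"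
  unfolding clinear_on_def by blast

lemma clinear_on_scale: "clinear_on (Domain T) G \<Longrightarrow> x \<in> Domain T \<Longrightarrow> G (c *\<^sub>C x) = c *\<^sub>C G x"
  unfolding clinear_on_def by blast

lemma clinear_on_zero: "clinear_on (Domain T) G \<Longrightarrow> G 0 = 0"
  using clinear_on_scale[of G 0 0] zero by auto

lemma clinear_on_diff:
  assumes "clinear_on (Domain T) G" "x \<in> Domain T" "y \<in> Domain T"
  shows "G (x - y) = G x - G y"
proof -
  have "(-1) *\<^sub>C y \<in> Domain T" using assms(3) scale by blast
  then have "G (x + (-1) *\<^sub>C y) = G x + (-1) *\<^sub>C G y"
    using assms clinear_on_add clinear_on_scale by metis
  then show ?thesis by (simp add: scaleC_minus_one)
qed

end

locale boundary_maps = lin_op T for T :: "('a::complex_normed_vector \<times> 'a) set" +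
  fixes G0 G1 :: "'a \<Rightarrow> 'g::complex_normed_vector"
  assumes clinear0: "clinear_on (Domain T) G0" and clinear1: "clinear_on (Domain T) G1"
begin

lemma eigen_eq_if_boundary_eq:
  assumes l: "l \<in> resolvent_set (A0_of T G0)"
    and f: "(f, l *\<^sub>C f) \<in> T" and g: "(g, l *\<^sub>C g) \<in> T" and eq: "G0 f = G0 g"
  shows "f = g"
proof -
  have "G0 (f - g) = 0" using clinear_on_diff[OF clinear0, of f g] f g eq by force
  then have "(0, f - g) \<in> resolvent_op (A0_of T G0) l"
    using eigen_diff[OF f g] by (simp add: resolvent_op_iff A0_of_iff)
  moreover have "(0, 0) \<in> resolvent_op (A0_of T G0) l"
    using zero clinear_on_zero[OF clinear0] by (simp add: resolvent_op_iff A0_of_iff)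
  moreover have "single_valued (resolvent_op (A0_of T G0) l)"
    using l unfolding resolvent_set_def by blast
  ultimately show ?thesis unfolding single_valued_def by fastforce
qed

lemma exists_eigen_same_boundary:
  assumes l: "l \<in> resolvent_set (A0_of T G0)" and "f \<in> Domain T"
  shows "\<exists>f'. (f', l *\<^sub>C f') \<in> T \<and> G0 f' = G0 f"
proof -
  obtain v where fv: "(f, v) \<in> T" using \<open>f \<in> Domain T\<close> by blast
  have "Domain (resolvent_op (A0_of T G0) l) = UNIV" using l unfolding resolvent_set_def by blast
  then obtain h where "(v - l *\<^sub>C f, h) \<in> resolvent_op (A0_of T G0) l" by blast
  then have h: "(h, v - l *\<^sub>C f + l *\<^sub>C h) \<in> T" "G0 h = 0" by (auto simp: resolvent_op_iff A0_of_iff)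
  have "(f - h, v - (v - l *\<^sub>C f + l *\<^sub>C h)) \<in> T" by (rule diff[OF fv h(1)])
  then have "(f - h, l *\<^sub>C (f - h)) \<in> T" by (simp add: scaleC_diff_right)
  moreover have "G0 (f - h) = G0 f" using clinear_on_diff[OF clinear0, of f h] fv h by force
  ultimately show ?thesis by blast
qed

lemma eigen_resolvent_shift:
  assumes f0: "(f0, l0 *\<^sub>C f0) \<in> T" and k: "(f0, k) \<in> resolvent_op (A0_of T G0) l"
  defines "f \<equiv> f0 + (l - l0) *\<^sub>C k"
  shows "(f, l *\<^sub>C f) \<in> T" and "G0 f = G0 f0"
proof -
  have k': "(k, f0 + l *\<^sub>C k) \<in> T" "G0 k = 0" using k by (auto simp: resolvent_op_iff A0_of_iff)
  have "(f, l0 *\<^sub>C f0 + (l - l0) *\<^sub>C (f0 + l *\<^sub>C k)) \<in> T"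
    unfolding f_def by (intro add f0 scale k'(1))
  moreover have "l0 *\<^sub>C f0 + (l - l0) *\<^sub>C (f0 + l *\<^sub>C k) = l *\<^sub>C f"
    unfolding f_def
    using scaleC_add_left[of l0 "l - l0" f0] scaleC_left_commute[of "l - l0" l k]
    by (simp add: scaleC_add_right add.assoc[symmetric])
  ultimately show "(f, l *\<^sub>C f) \<in> T" by simp
  have "k \<in> Domain T" "f0 \<in> Domain T" "(l - l0) *\<^sub>C k \<in> Domain T"
    using k'(1) f0 scale by blast+
  then show "G0 f = G0 f0"
    unfolding f_def using clinear_on_add[OF clinear0] clinear_on_scale[OF clinear0] k'(2) by simp
qed

lemma Domain_weyl_function:
  assumes "l \<in> resolvent_set (A0_of T G0)"
  shows "Domain (weyl_function T G0 G1 l) = G0 ` Domain T"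
proof
  show "Domain (weyl_function T G0 G1 l) \<subseteq> G0 ` Domain T" by (force simp: weyl_function_iff)
  show "G0 ` Domain T \<subseteq> Domain (weyl_function T G0 G1 l)"
  proof
    fix p assume "p \<in> G0 ` Domain T"
    then obtain f where "f \<in> Domain T" "p = G0 f" by blast
    then obtain f' where "(f', l *\<^sub>C f') \<in> T" "G0 f' = p"
      using exists_eigen_same_boundary[OF assms] by metis
    then have "(p, G1 f') \<in> weyl_function T G0 G1 l" by (auto simp: weyl_function_iff)
    then show "p \<in> Domain (weyl_function T G0 G1 l)" by blast
  qed
qed

lemma densely_defined_weyl_function:
  assumes "l \<in> resolvent_set (A0_of T G0)" "closure (G0 ` Domain T) = UNIV"
  shows "densely_defined (weyl_function T G0 G1 l)"
  using Domain_weyl_function[OF assms(1)] assms(2) by (simp add: densely_defined_def)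

lemma Range_weyl_function: "Range (weyl_function T G0 G1 l) \<subseteq> G1 ` Domain T"
  by (force simp: weyl_function_iff)

lemma is_op_weyl_function:
  assumes l: "l \<in> resolvent_set (A0_of T G0)"
  shows "is_op (weyl_function T G0 G1 l)"
  unfolding is_op_def
proof (intro conjI allI impI)
  let ?M = "weyl_function T G0 G1 l"
  show "(0, 0) \<in> ?M"
    using zero clinear_on_zero[OF clinear0] clinear_on_zero[OF clinear1] by (force simp: weyl_function_iff)
next
  fix x y u v assume "(x, y) \<in> weyl_function T G0 G1 l" "(u, v) \<in> weyl_function T G0 G1 l"
  then obtain f g where f: "(f, l *\<^sub>C f) \<in> T" "x = G0 f" "y = G1 f"
    and g: "(g, l *\<^sub>C g) \<in> T" "u = G0 g" "v = G1 g" by (auto simp: weyl_function_iff)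
  have "G0 (f + g) = x + u" "G1 (f + g) = y + v"
    using clinear_on_add[OF clinear0, of f g] clinear_on_add[OF clinear1, of f g] f g by force+
  with eigen_add[OF f(1) g(1)] show "(x + u, y + v) \<in> weyl_function T G0 G1 l"
    by (force simp: weyl_function_iff)
next
  fix c x y assume "(x, y) \<in> weyl_function T G0 G1 l"
  then obtain f where f: "(f, l *\<^sub>C f) \<in> T" "x = G0 f" "y = G1 f" by (auto simp: weyl_function_iff)
  have "G0 (c *\<^sub>C f) = c *\<^sub>C x" "G1 (c *\<^sub>C f) = c *\<^sub>C y"
    using clinear_on_scale[OF clinear0, of f c] clinear_on_scale[OF clinear1, of f c] f by force+
  with eigen_scale[OF f(1), of c] show "(c *\<^sub>C x, c *\<^sub>C y) \<in> weyl_function T G0 G1 l"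
    by (force simp: weyl_function_iff)
next
  show "single_valued (weyl_function T G0 G1 l)"
    by (rule single_valuedI)
      (auto simp: weyl_function_iff dest: eigen_eq_if_boundary_eq[OF l])
qed

lemma gamma_field_resolvent_shift:
  assumes l0: "l0 \<in> resolvent_set (A0_of T G0)" and l: "l \<in> resolvent_set (A0_of T G0)"
  shows "op_comp (op_plus op_id (op_scale (l - l0) (resolvent_op (A0_of T G0) l))) (gamma_field T G0 l0)
    = gamma_field T G0 l" (is "?X = _")
proof (intro set_eqI iffI; clarify)
  fix p f assume "(p, f) \<in> ?X"
  then obtain f0 k where "(f0, l0 *\<^sub>C f0) \<in> T" "p = G0 f0"
    "(f0, k) \<in> resolvent_op (A0_of T G0) l" "f = f0 + (l - l0) *\<^sub>C k"
    by (auto simp: op_comp_id_plus_iff gamma_field_iff)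
  then show "(p, f) \<in> gamma_field T G0 l"
    using eigen_resolvent_shift by (metis gamma_field_iff)
next
  fix p f assume "(p, f) \<in> gamma_field T G0 l"
  then have f: "(f, l *\<^sub>C f) \<in> T" "p = G0 f" by (simp_all add: gamma_field_iff)
  then obtain f0 where f0: "(f0, l0 *\<^sub>C f0) \<in> T" "G0 f0 = p"
    using exists_eigen_same_boundary[OF l0] by blast
  have "Domain (resolvent_op (A0_of T G0) l) = UNIV" using l unfolding resolvent_set_def by blast
  then obtain k where k: "(f0, k) \<in> resolvent_op (A0_of T G0) l" by blast
  have "f0 + (l - l0) *\<^sub>C k = f"
    using eigen_eq_if_boundary_eq[OF l] eigen_resolvent_shift[OF f0(1) k] f f0(2) by metis
  then show "(p, f) \<in> ?X" using f0 k by (auto simp: op_comp_id_plus_iff gamma_field_iff)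
qed

end

section \<open>Adjoints\<close>

lemma adj_add:
  assumes "is_cinner ipX" "is_cinner ipY"
  shows "(y1, x1) \<in> adj ipX ipY A \<Longrightarrow> (y2, x2) \<in> adj ipX ipY A \<Longrightarrow> (y1 + y2, x1 + x2) \<in> adj ipX ipY A"
  using complex_inner.add_right[OF complex_inner.intro[OF assms(1)]]
    complex_inner.add_right[OF complex_inner.intro[OF assms(2)]]
  by (simp add: adj_iff)

lemma adj_scale:
  assumes "is_cinner ipX" "is_cinner ipY"
  shows "(y, x) \<in> adj ipX ipY A \<Longrightarrow> (c *\<^sub>C y, c *\<^sub>C x) \<in> adj ipX ipY A"
  using complex_inner.scale_right[OF complex_inner.intro[OF assms(1)]]
    complex_inner.scale_right[OF complex_inner.intro[OF assms(2)]]
  by (simp add: adj_iff)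

context complex_inner
begin

lemma single_valued_adj:
  assumes "closure (Domain A) = UNIV"
  shows "single_valued (adj ip ipY A)"
proof (rule single_valuedI)
  fix y x1 x2 assume "(y, x1) \<in> adj ip ipY A" "(y, x2) \<in> adj ip ipY A"
  then have "\<forall>u\<in>Domain A. ip u (x1 - x2) = 0" by (auto simp: adj_iff diff_right)
  then show "x1 = x2" using eq_0_if_orthogonal_dense[OF assms, of "x1 - x2"] by simp
qed

end

context complex_hilbert
begin

text \<open>The preimage \<open>k\<close> of \<open>h\<close> under \<open>C\<^sup>* - cnj \<mu>\<close> is the Riesz representative of the
  bounded functional \<open>w \<mapsto> ((C - \<mu>)\<^sup>-\<^sup>1 w, h)\<close>; only linearity of \<open>C = D\<^sup>*\<close> is used.\<close>
lemma adj_adj_minus_cnj_surj: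
  assumes mu: "\<mu> \<in> resolvent_set (adj ip ip D)"
  shows "\<exists>k. (k, h + cnj \<mu> *\<^sub>C k) \<in> adj ip ip (adj ip ip D)"
proof -
  let ?C = "adj ip ip D"
  let ?R = "resolvent_op ?C \<mu>"
  have sv: "single_valued ?R" and dom: "Domain ?R = UNIV"
    and "\<exists>B. \<forall>(x, y)\<in>?R. norm y \<le> B * norm x"
    using mu unfolding resolvent_set_def by blast+
  then obtain B where B: "\<And>x y. (x, y) \<in> ?R \<Longrightarrow> norm y \<le> B * norm x" by blast
  have "\<forall>w. \<exists>u. (w, u) \<in> ?R" using dom by blast
  then obtain r where r: "\<And>w. (w, r w) \<in> ?R" by metis
  have rC: "(r w, w + \<mu> *\<^sub>C r w) \<in> ?C" for w using r[of w] by (simp add: resolvent_op_iff)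
  have r_eq: "(w, u) \<in> ?R \<Longrightarrow> r w = u" for w u using sv r unfolding single_valued_def by blast
  have r_add: "r (w1 + w2) = r w1 + r w2" for w1 w2
  proof (rule r_eq)
    show "(w1 + w2, r w1 + r w2) \<in> ?R"
      using adj_add[OF is_cinner is_cinner rC[of w1] rC[of w2]]
      by (simp add: resolvent_op_iff scaleC_add_right algebra_simps)
  qed
  have r_scale: "r (c *\<^sub>C w) = c *\<^sub>C r w" for c w
  proof (rule r_eq)
    show "(c *\<^sub>C w, c *\<^sub>C r w) \<in> ?R"
      using adj_scale[OF is_cinner is_cinner rC[of w], of c]
      by (simp add: resolvent_op_iff scaleC_add_right scaleC_left_commute)
  qed
  have "\<exists>k. \<forall>w. ip (r w) h = ip w k"
  proof (rule riesz_representation)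
    show "ip (r (x + y)) h = ip (r x) h + ip (r y) h" for x y by (simp add: r_add add_left)
    show "ip (r (c *\<^sub>C x)) h = c * ip (r x) h" for c x by (simp add: r_scale scale_left)
    show "cmod (ip (r x) h) \<le> (B * norm h) * norm x" for x
    proof -
      have "cmod (ip (r x) h) \<le> norm (r x) * norm h" by (rule cauchy_schwarz)
      also have "\<dots> \<le> (B * norm x) * norm h" by (intro mult_right_mono B r) simp
      finally show ?thesis by (simp add: algebra_simps)
    qed
  qed
  then obtain k where k: "\<And>w. ip (r w) h = ip w k" by blast
  have "(k, h + cnj \<mu> *\<^sub>C k) \<in> adj ip ip ?C"
    unfolding adj_iff[where A = ?C]
  proof (intro allI impI)
    fix u v assume "(u, v) \<in> ?C"
    then have "r (v - \<mu> *\<^sub>C u) = u" by (intro r_eq) (simp add: resolvent_op_iff)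
    then have "ip (v - \<mu> *\<^sub>C u) k = ip u h" using k[of "v - \<mu> *\<^sub>C u"] by simp
    then show "ip v k = ip u (h + cnj \<mu> *\<^sub>C k)"
      by (simp add: diff_left scale_left add_right scale_right algebra_simps)
  qed
  then show ?thesis by blast
qed

end

section \<open>Triples for an adjoint pair\<close>

locale adjoint_triple =
  fixes ipH :: "'h::{complex_normed_vector,complete_space} \<Rightarrow> 'h \<Rightarrow> complex"
    and ipG :: "'g::complex_normed_vector \<Rightarrow> 'g \<Rightarrow> complex"
    and T Tt :: "('h \<times> 'h) set"
    and G0 G1 Gt0 Gt1 :: "'h \<Rightarrow> 'g"
  assumes hilbH: "is_cinner ipH" and hilbG: "is_cinner ipG"
    and T_op: "is_op T" and Tt_op: "is_op Tt"
    and clinear: "clinear_on (Domain T) G0" "clinear_on (Domain T) G1"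
      "clinear_on (Domain Tt) Gt0" "clinear_on (Domain Tt) Gt1"
    and green_identity: "\<forall>(f, Tf)\<in>T. \<forall>(g, Ttg)\<in>Tt.
      ipH Tf g - ipH f Ttg = ipG (G1 f) (Gt0 g) - ipG (G0 f) (Gt1 g)"
    and dense: "closure (G0 ` Domain T) = UNIV" "closure (Gt0 ` Domain Tt) = UNIV"
    and adj_A0: "adj ipH ipH (A0_of T G0) = A0_of Tt Gt0"
    and adj_At0: "adj ipH ipH (A0_of Tt Gt0) = A0_of T G0"
begin

sublocale H: complex_hilbert ipH by unfold_locales (rule hilbH)
sublocale G: complex_inner ipG by unfold_locales (rule hilbG)
sublocale bd: boundary_maps T G0 G1 by unfold_locales (use T_op clinear in auto)
sublocale bdt: boundary_maps Tt Gt0 Gt1 by unfold_locales (use Tt_op clinear in auto)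

abbreviation "M \<equiv> weyl_function T G0 G1"
abbreviation "Mt \<equiv> weyl_function Tt Gt0 Gt1"
abbreviation "\<gamma> \<equiv> gamma_field T G0"
abbreviation "\<gamma>t \<equiv> gamma_field Tt Gt0"
abbreviation "A0 \<equiv> A0_of T G0"
abbreviation "At0 \<equiv> A0_of Tt Gt0"

lemma green: "(f, a) \<in> T \<Longrightarrow> (g, b) \<in> Tt \<Longrightarrow> ipH a g - ipH f b = ipG (G1 f) (Gt0 g) - ipG (G0 f) (Gt1 g)"
  using green_identity by blast

lemma green_eigen_cnj:
  assumes "(f, l *\<^sub>C f) \<in> T" "(g, m *\<^sub>C g) \<in> Tt"
  shows "(cnj l - m) * ipH g f = ipG (Gt0 g) (G1 f) - ipG (Gt1 g) (G0 f)"
proof -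
  have "(l - cnj m) * ipH f g = ipG (G1 f) (Gt0 g) - ipG (G0 f) (Gt1 g)"
    using green[OF assms] by (simp add: H.scale_left H.scale_right algebra_simps)
  then have "cnj ((l - cnj m) * ipH f g) = cnj (ipG (G1 f) (Gt0 g) - ipG (G0 f) (Gt1 g))" by simp
  then show ?thesis by (simp add: H.conj_sym[of f g] G.conj_sym[of "G1 f"] G.conj_sym[of "G0 f"])
qed

text \<open>The value of \<open>\<gamma>~(\<mu>)\<^sup>*\<close> at \<open>h\<close> is \<open>\<Gamma>\<^sub>1 k\<close> for a preimage \<open>k\<close> of \<open>h\<close> under \<open>A\<^sub>0 - cnj \<mu>\<close>.\<close>
lemma adj_gamma_field_total:
  assumes m: "m \<in> resolvent_set At0"
  shows "\<exists>y. (h, y) \<in> adj ipG ipH (\<gamma>t m)"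
proof -
  obtain k where "(k, h + cnj m *\<^sub>C k) \<in> A0"
    using H.adj_adj_minus_cnj_surj[of m A0 h] m adj_A0 adj_At0 by auto
  then have k: "(k, h + cnj m *\<^sub>C k) \<in> T" "G0 k = 0" by (auto simp: A0_of_iff)
  have "ipH v h = ipG u (G1 k)" if "(u, v) \<in> \<gamma>t m" for u v
  proof -
    have g: "(v, m *\<^sub>C v) \<in> Tt" "u = Gt0 v" using that by (auto simp: gamma_field_iff)
    have "ipH (h + cnj m *\<^sub>C k) v - ipH k (m *\<^sub>C v) = ipG (G1 k) u"
      using green[OF k(1) g(1)] g(2) k(2) by simp
    then have "cnj (ipH h v) = cnj (ipG (G1 k) u)" by (simp add: H.add_left H.scale_left H.scale_right)
    then show ?thesis by (simp add: H.conj_sym[of h v] G.conj_sym[of "G1 k" u])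
  qed
  then show ?thesis by (auto simp: adj_iff)
qed

lemma adj_weyl_function_iff:
  assumes m: "m \<in> resolvent_set At0" and f: "(f, l *\<^sub>C f) \<in> T"
    and y: "((l - cnj m) *\<^sub>C f, y) \<in> adj ipG ipH (\<gamma>t m)"
  shows "(G0 f, x) \<in> adj ipG ipG (Mt m) \<longleftrightarrow> x = G1 f - y"
proof -
  have "ipG v (G0 f) = ipG u (G1 f - y)" if uv: "(u, v) \<in> Mt m" for u v
  proof -
    obtain g where g: "(g, m *\<^sub>C g) \<in> Tt" "u = Gt0 g" "v = Gt1 g"
      using uv by (auto simp: weyl_function_iff)
    have "(cnj l - m) * ipH g f = ipG (Gt0 g) y"
      using y g by (simp add: adj_iff gamma_field_iff H.scale_right)
    then show ?thesis using green_eigen_cnj[OF f g(1)] g by (simp add: G.diff_right algebra_simps)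
  qed
  then have in_adj: "(G0 f, G1 f - y) \<in> adj ipG ipG (Mt m)" by (simp add: adj_iff)
  have "single_valued (adj ipG ipG (Mt m))"
    using G.single_valued_adj[of "Mt m"] bdt.Domain_weyl_function[OF m] dense(2) by simp
  with in_adj show ?thesis unfolding single_valued_def by blast
qed

lemma weyl_function_subset_adj: "M l \<subseteq> adj ipG ipG (Mt (cnj l))"
proof
  fix pq assume "pq \<in> M l"
  then obtain f where f: "(f, l *\<^sub>C f) \<in> T" "pq = (G0 f, G1 f)"
    by (cases pq) (auto simp: weyl_function_iff)
  have "ipG v (G0 f) = ipG u (G1 f)" if uv: "(u, v) \<in> Mt (cnj l)" for u v
  proof -
    obtain g where g: "(g, cnj l *\<^sub>C g) \<in> Tt" "u = Gt0 g" "v = Gt1 g"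
      using uv by (auto simp: weyl_function_iff)
    show ?thesis using green_eigen_cnj[OF f(1) g(1)] g(2,3) by simp
  qed
  then show "pq \<in> adj ipG ipG (Mt (cnj l))" by (simp add: f(2) adj_iff)
qed

lemma weyl_function_minus_adj:
  assumes l: "l \<in> resolvent_set A0" and m: "m \<in> resolvent_set At0"
  shows "op_minus (M l) (adj ipG ipG (Mt m)) = op_scale (l - cnj m) (op_comp (adj ipG ipH (\<gamma>t m)) (\<gamma> l))"
proof (intro set_eqI iffI; clarify)
  fix p q assume "(p, q) \<in> op_minus (M l) (adj ipG ipG (Mt m))"
  then obtain f x where f: "(f, l *\<^sub>C f) \<in> T" and p: "p = G0 f" and q: "q = G1 f - x"
    and x: "(G0 f, x) \<in> adj ipG ipG (Mt m)"
    by (auto simp: op_minus_iff weyl_function_iff)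
  obtain y where y: "(f, y) \<in> adj ipG ipH (\<gamma>t m)" using adj_gamma_field_total[OF m] by blast
  then have "((l - cnj m) *\<^sub>C f, (l - cnj m) *\<^sub>C y) \<in> adj ipG ipH (\<gamma>t m)"
    by (rule adj_scale[OF hilbG hilbH])
  then have "q = (l - cnj m) *\<^sub>C y" using adj_weyl_function_iff[OF m f] x q by simp
  then show "(p, q) \<in> op_scale (l - cnj m) (op_comp (adj ipG ipH (\<gamma>t m)) (\<gamma> l))"
    using p f y by (auto simp: op_scale_iff op_comp_iff gamma_field_iff)
next
  fix p q assume "(p, q) \<in> op_scale (l - cnj m) (op_comp (adj ipG ipH (\<gamma>t m)) (\<gamma> l))"
  then obtain f y where f: "(f, l *\<^sub>C f) \<in> T" and p: "p = G0 f" and q: "q = (l - cnj m) *\<^sub>C y"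
    and y: "(f, y) \<in> adj ipG ipH (\<gamma>t m)"
    by (auto simp: op_scale_iff op_comp_iff gamma_field_iff)
  then have "((l - cnj m) *\<^sub>C f, q) \<in> adj ipG ipH (\<gamma>t m)"
    using adj_scale[OF hilbG hilbH] by blast
  then have "(p, G1 f - q) \<in> adj ipG ipG (Mt m)" using adj_weyl_function_iff[OF m f] p by simp
  moreover have "(p, G1 f) \<in> M l" using f p by (auto simp: weyl_function_iff)
  ultimately show "(p, q) \<in> op_minus (M l) (adj ipG ipG (Mt m))"
    unfolding op_minus_iff by force
qed

lemma weyl_function_eq_adj_plus:
  assumes l0: "l0 \<in> resolvent_set A0" "l0 \<in> resolvent_set At0" and l: "l \<in> resolvent_set A0"
  shows "M l = op_plus (adj ipG ipG (Mt l0))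
               (op_comp (adj ipG ipH (\<gamma>t l0))
                 (op_scale (l - cnj l0)
                   (op_comp (op_plus op_id (op_scale (l - l0) (resolvent_op A0 l))) (\<gamma> l0))))"
  unfolding bd.gamma_field_resolvent_shift[OF l0(1) l]
proof (intro set_eqI iffI; clarify)
  fix p q assume "(p, q) \<in> M l"
  then obtain f where f: "(f, l *\<^sub>C f) \<in> T" and pq: "p = G0 f" "q = G1 f"
    by (auto simp: weyl_function_iff)
  obtain y where y: "((l - cnj l0) *\<^sub>C f, y) \<in> adj ipG ipH (\<gamma>t l0)"
    using adj_gamma_field_total[OF l0(2)] by blast
  then have "(p, q - y) \<in> adj ipG ipG (Mt l0)" using adj_weyl_function_iff[OF l0(2) f] pq by simp
  with f y pq show "(p, q) \<in> op_plus (adj ipG ipG (Mt l0))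
    (op_comp (adj ipG ipH (\<gamma>t l0)) (op_scale (l - cnj l0) (\<gamma> l)))"
    by (force simp: op_plus_iff op_comp_iff op_scale_iff gamma_field_iff)
next
  fix p q assume "(p, q) \<in> op_plus (adj ipG ipG (Mt l0))
    (op_comp (adj ipG ipH (\<gamma>t l0)) (op_scale (l - cnj l0) (\<gamma> l)))"
  then obtain x y f where x: "(G0 f, x) \<in> adj ipG ipG (Mt l0)" and f: "(f, l *\<^sub>C f) \<in> T"
    and y: "((l - cnj l0) *\<^sub>C f, y) \<in> adj ipG ipH (\<gamma>t l0)" and pq: "p = G0 f" "q = x + y"
    by (auto simp: op_plus_iff op_comp_iff op_scale_iff gamma_field_iff)
  then have "q = G1 f" using adj_weyl_function_iff[OF l0(2) f y] by simp
  with f pq show "(p, q) \<in> M l" by (auto simp: weyl_function_iff)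
qed

end

lemma adjoint_triple_swap:
  assumes "adjoint_triple ipH ipG T Tt G0 G1 Gt0 Gt1"
  shows "adjoint_triple ipH ipG Tt T Gt0 Gt1 G0 G1"
proof -
  interpret adjoint_triple ipH ipG T Tt G0 G1 Gt0 Gt1 by (rule assms)
  have "ipH b f - ipH g a = ipG (Gt1 g) (G0 f) - ipG (Gt0 g) (G1 f)" if "(g, b) \<in> Tt" "(f, a) \<in> T"
    for g b f a
  proof -
    have "cnj (ipH a g - ipH f b) = cnj (ipG (G1 f) (Gt0 g) - ipG (G0 f) (Gt1 g))"
      using green[OF that(2,1)] by simp
    then have "ipH g a - ipH b f = ipG (Gt0 g) (G1 f) - ipG (Gt1 g) (G0 f)"
      by (simp add: H.conj_sym[of a g] H.conj_sym[of f b] G.conj_sym[of "G1 f"] G.conj_sym[of "G0 f"])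
    then show ?thesis by (simp add: algebra_simps)
  qed
  then show ?thesis
    by unfold_locales (use hilbH hilbG T_op Tt_op clinear dense adj_A0 adj_At0 in auto)
qed

theorem proposition3p4:
  fixes ipH :: "'h::{complex_normed_vector,complete_space} \<Rightarrow> 'h \<Rightarrow> complex"
    and ipG :: "'g::{complex_normed_vector,complete_space} \<Rightarrow> 'g \<Rightarrow> complex"
    and S St T Tt :: "('h \<times> 'h) set"
    and \<Gamma>0 \<Gamma>1 \<Gamma>t0 \<Gamma>t1 :: "'h \<Rightarrow> 'g"
    and A0 At0 :: "('h \<times> 'h) set"
    and \<gamma> \<gamma>t :: "complex \<Rightarrow> ('g \<times> 'h) set"
    and M Mt :: "complex \<Rightarrow> ('g \<times> 'g) set"
  assumes hilbH: "is_cinner ipH" and sepH: "separable_type TYPE('h)"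
    and hilbG: "is_cinner ipG"
    and S_cl: "closed_op S" and St_cl: "closed_op St"
    and S_dd: "densely_defined S" and St_dd: "densely_defined St"
    and adj_pair: "\<forall>(f, Sf)\<in>S. \<forall>(g, Stg)\<in>St. ipH Sf g = ipH f Stg"
    and T_op: "is_op T" and Tt_op: "is_op Tt"
    and T_sub: "T \<subseteq> adj ipH ipH S" and T_core: "closure T = adj ipH ipH S"
    and Tt_sub: "Tt \<subseteq> adj ipH ipH St" and Tt_core: "closure Tt = adj ipH ipH St"
    and lin: "clinear_on (Domain T) \<Gamma>0" "clinear_on (Domain T) \<Gamma>1"
             "clinear_on (Domain Tt) \<Gamma>t0" "clinear_on (Domain Tt) \<Gamma>t1"
    and G: "\<forall>(f, Tf)\<in>T. \<forall>(g, Ttg)\<in>Tt.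
              ipH Tf g - ipH f Ttg = ipG (\<Gamma>1 f) (\<Gamma>t0 g) - ipG (\<Gamma>0 f) (\<Gamma>t1 g)"
    and D: "closure (\<Gamma>0 ` Domain T) = UNIV" "closure (\<Gamma>t0 ` Domain Tt) = UNIV"
    and A0_def: "A0 = A0_of T \<Gamma>0" and At0_def: "At0 = A0_of Tt \<Gamma>t0"
    and Mcond: "adj ipH ipH A0 = At0" "adj ipH ipH At0 = A0"
    and rho: "resolvent_set A0 \<noteq> {}"
    and \<gamma>_def: "\<gamma> = gamma_field T \<Gamma>0" and \<gamma>t_def: "\<gamma>t = gamma_field Tt \<Gamma>t0"
    and M_def: "M = weyl_function T \<Gamma>0 \<Gamma>1" and Mt_def: "Mt = weyl_function Tt \<Gamma>t0 \<Gamma>t1"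
  shows
   "(\<forall>l\<in>resolvent_set A0. \<forall>m\<in>resolvent_set At0.
      \<comment> \<open>(i)\<close>
      (is_op (M l) \<and> is_op (Mt m) \<and>
       Domain (M l) = \<Gamma>0 ` Domain T \<and> Domain (Mt m) = \<Gamma>t0 ` Domain Tt \<and>
       densely_defined (M l) \<and> densely_defined (Mt m) \<and>
       Range (M l) \<subseteq> \<Gamma>1 ` Domain T \<and> Range (Mt m) \<subseteq> \<Gamma>t1 ` Domain Tt) \<and>
      \<comment> \<open>(ii)\<close>
      (M l \<subseteq> adj ipG ipG (Mt (cnj l)) \<and> Mt (cnj l) \<subseteq> adj ipG ipG (M l) \<and>
       op_minus (M l) (adj ipG ipG (Mt m))
         = op_scale (l - cnj m) (op_comp (adj ipG ipH (\<gamma>t m)) (\<gamma> l)) \<and>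
       op_minus (adj ipG ipG (M l)) (Mt m)
         = op_scale (cnj l - m) (op_comp (adj ipG ipH (\<gamma> l)) (\<gamma>t m)))) \<and>
    \<comment> \<open>(iii)\<close>
    (\<forall>l0\<in>resolvent_set A0 \<inter> resolvent_set At0. \<forall>l\<in>resolvent_set A0.
       M l = op_plus (adj ipG ipG (Mt l0))
               (op_comp (adj ipG ipH (\<gamma>t l0))
                 (op_scale (l - cnj l0)
                   (op_comp (op_plus op_id (op_scale (l - l0) (resolvent_op A0 l))) (\<gamma> l0))))) \<and>
    (\<forall>m0\<in>resolvent_set A0 \<inter> resolvent_set At0. \<forall>m\<in>resolvent_set At0.
       Mt m = op_plus (adj ipG ipG (M m0))
               (op_comp (adj ipG ipH (\<gamma> m0))
                 (op_scale (m - cnj m0)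
                   (op_comp (op_plus op_id (op_scale (m - m0) (resolvent_op At0 m))) (\<gamma>t m0)))))"
proof -
  interpret T: adjoint_triple ipH ipG T Tt \<Gamma>0 \<Gamma>1 \<Gamma>t0 \<Gamma>t1
    by unfold_locales (use hilbH hilbG T_op Tt_op lin G D Mcond A0_def At0_def in auto)
  interpret Tt: adjoint_triple ipH ipG Tt T \<Gamma>t0 \<Gamma>t1 \<Gamma>0 \<Gamma>1
    by (rule adjoint_triple_swap) unfold_locales
  have Mt_subset_adj: "T.Mt (cnj l) \<subseteq> adj ipG ipG (T.M l)" for l
    using Tt.weyl_function_subset_adj[of "cnj l"] by simp
  have adj_minus_Mt: "op_minus (adj ipG ipG (T.M l)) (T.Mt m)
      = op_scale (cnj l - m) (op_comp (adj ipG ipH (T.\<gamma> l)) (T.\<gamma>t m))"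
    if "l \<in> resolvent_set T.A0" "m \<in> resolvent_set T.At0" for l m
    using op_minus_commute[of "adj ipG ipG (T.M l)"] Tt.weyl_function_minus_adj[OF that(2,1)]
    by (simp add: op_scale_op_scale)
  show ?thesis
    unfolding M_def Mt_def \<gamma>_def \<gamma>t_def A0_def At0_def
    by (intro conjI ballI)
      (simp_all add: T.bd.is_op_weyl_function T.bdt.is_op_weyl_function
        T.bd.Domain_weyl_function T.bdt.Domain_weyl_function
        T.bd.densely_defined_weyl_function[OF _ D(1)] T.bdt.densely_defined_weyl_function[OF _ D(2)]
        T.bd.Range_weyl_function T.bdt.Range_weyl_function
        T.weyl_function_subset_adj Mt_subset_adj T.weyl_function_minus_adj adj_minus_Mt
        T.weyl_function_eq_adj_plus Tt.weyl_function_eq_adj_plus)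
qed

end
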